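(* Let $f:\mathbf U\to\mathbf V$ be a map in the set-up, let $P$ be a puzzle piece of $f$, and let $\{x_1,\dots,x_m\}\subset\mathbf V$ be a finite set of points with $x_i\in D(P)\setminus P$ for $1\le i\le m$. Write $k_i=k(x_i)\ge1$, so that $f^{k_i}(\mathcal L_{x_i}(P))=P$. Then (1) for every $1\le i\le m$ and every $0\le j<k_i$, either $f^j(\mathcal L_{x_i}(P))=\mathcal L_{x_s}(P)$ for some $1\le s\le m$, or $f^j(\mathcal L_{x_i}(P))\cap\mathcal L_{x_t}(P)=\emptyset$ for all $1\le t\le m$; (2) $\bigcup_{i=1}^m\mathcal L_{x_i}(P)\cup P$ is a nice set.
   Context: A map in the set-up: $\mathbf V$ is a disjoint union of finitely many Jordan domains in $\mathbb C$ with pairwise disjoint quasicircle boundaries; $\mathbf U$ is compactly contained in $\mathbf V$ and is a union of finitely many Jordan domains with pairwise disjoint closures; $f:\mathbf U\to\mathbf V$ is a proper holomorphic map all of whose critical points lie in $\mathcal K_f:=\{z\in\mathbf U: f^n(z)\in\mathbf U\ \forall n\ge0\}$, and each component of $\mathbf V$ contains at most one component of $\mathcal K_f$ containing critical points. Puzzle pieces of depth $n\ge0$ are the components of $f^{-n}(\mathbf V)$. A finite union $X$ of puzzle pieces is nice if for all $z\in\partial X$ and $n\ge1$, $f^n(z)\notin X$ whenever defined. $\mathrm{Comp}_z(A)$ is the component of an open set $A$ containing $z$. For a finite union $X$ of puzzle pieces, $D(X)=\{z\in\mathbf V:\exists k\ge0,\ f^k(z)\in X\}$; for $z\in D(X)\setminus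 X$, $k(z)$ is the least positive integer with $f^{k(z)}(z)\in X$, and $\mathcal L_z(X):=\mathrm{Comp}_z\big(f^{-k(z)}(\mathrm{Comp}_{f^{k(z)}(z)}(X))\big)$. *)

theory Defs
  imports "HOL-Complex_Analysis.Complex_Analysis"
begin

text \<open>Metric definition of a quasiconformal homeomorphism of the plane:
  a homeomorphism h of C whose linear dilatation
  H_h(z) = limsup_{r->0+} max_{|w-z|=r}|h w - h z| / min_{|w-z|=r}|h w - h z|
  is bounded uniformly in z.\<close>

definition qc_homeomorphism :: "(complex \<Rightarrow> complex) \<Rightarrow> bool" where
  "qc_homeomorphism h \<longleftrightarrow>
     (\<exists>g. homeomorphism UNIV UNIV h g) \<and>
     (\<exists>H::real. \<forall>z. Limsup (at_right (0::real))
        (\<lambda>r. ereal (Sup ((\<lambda>w. cmod (h w - h z)) ` sphere z r)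
                    / Inf ((\<lambda>w. cmod (h w - h z)) ` sphere z r))) \<le> ereal H)"

definition quasicircle :: "complex set \<Rightarrow> bool" where
  "quasicircle Q \<longleftrightarrow> (\<exists>h. qc_homeomorphism h \<and> Q = h ` sphere 0 1)"

definition jordan_domain :: "complex set \<Rightarrow> bool" where
  "jordan_domain D \<longleftrightarrow>
     (\<exists>c. simple_path c \<and> pathfinish c = pathstart c \<and> D = inside (path_image c))"

text \<open>Iterates f^n are defined at z when z, f z, ..., f^(n-1) z lie in U.
  preim f U n A is f^{-n}(A).\<close>

definition preim :: "(complex \<Rightarrow> complex) \<Rightarrow> complex set \<Rightarrow> nat \<Rightarrow> complex set \<Rightarrow> complex set" where
  "preim f U n A = {z. (\<forall>j<n. (f ^^ j) z \<in> U) \<and> (f ^^ n) z \<in> A}"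

definition filled_set :: "(complex \<Rightarrow> complex) \<Rightarrow> complex set \<Rightarrow> complex set" where
  "filled_set f U = {z \<in> U. \<forall>n. (f ^^ n) z \<in> U}"

definition critical_point :: "(complex \<Rightarrow> complex) \<Rightarrow> complex set \<Rightarrow> complex \<Rightarrow> bool" where
  "critical_point f U z \<longleftrightarrow> z \<in> U \<and> deriv f z = 0"

definition in_setup :: "(complex \<Rightarrow> complex) \<Rightarrow> complex set \<Rightarrow> complex set \<Rightarrow> bool" where
  "in_setup f U V \<longleftrightarrow>
     (\<exists>\<V>. finite \<V> \<and> V = \<Union>\<V> \<and>
        (\<forall>D\<in>\<V>. jordan_domain D \<and> quasicircle (frontier D)) \<and>
        pairwise (\<lambda>A B. A \<inter> B = {} \<and> frontier A \<inter> frontier B = {}) \<V>) \<and>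
     (\<exists>\<U>. finite \<U> \<and> U = \<Union>\<U> \<and> (\<forall>D\<in>\<U>. jordan_domain D) \<and>
        pairwise (\<lambda>A B. closure A \<inter> closure B = {}) \<U>) \<and>
     compact (closure U) \<and> closure U \<subseteq> V \<and>
     f holomorphic_on U \<and> f ` U \<subseteq> V \<and>
     (\<forall>K. compact K \<and> K \<subseteq> V \<longrightarrow> compact {z \<in> U. f z \<in> K}) \<and>
     (\<forall>z. critical_point f U z \<longrightarrow> z \<in> filled_set f U) \<and>
     (\<forall>C\<in>components V. \<forall>c1 c2.
        critical_point f U c1 \<and> critical_point f U c2 \<and> c1 \<in> C \<and> c2 \<in> C \<longrightarrow>
        connected_component (filled_set f U) c1 c2)"

definition puzzle_piece :: "(complex \<Rightarrow> complex) \<Rightarrow> complex set \<Rightarrow> complex set \<Rightarrow> complex set \<Rightarrow> bool" where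
  "puzzle_piece f U V P \<longleftrightarrow> (\<exists>n. P \<in> components (preim f U n V))"

definition nice :: "(complex \<Rightarrow> complex) \<Rightarrow> complex set \<Rightarrow> complex set \<Rightarrow> complex set \<Rightarrow> bool" where
  "nice f U V X \<longleftrightarrow>
     (\<exists>\<P>. finite \<P> \<and> (\<forall>P\<in>\<P>. puzzle_piece f U V P) \<and> X = \<Union>\<P>) \<and>
     (\<forall>z\<in>frontier X. \<forall>n\<ge>1. (\<forall>j<n. (f ^^ j) z \<in> U) \<longrightarrow> (f ^^ n) z \<notin> X)"

definition Comp :: "complex \<Rightarrow> complex set \<Rightarrow> complex set" where
  "Comp z A = connected_component_set A z"

definition domD :: "(complex \<Rightarrow> complex) \<Rightarrow> complex set \<Rightarrow> complex set \<Rightarrow> complex set \<Rightarrow> complex set" where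
  "domD f U V X = {z \<in> V. \<exists>k. (\<forall>j<k. (f ^^ j) z \<in> U) \<and> (f ^^ k) z \<in> X}"

definition entry_time :: "(complex \<Rightarrow> complex) \<Rightarrow> complex set \<Rightarrow> complex set \<Rightarrow> complex \<Rightarrow> nat" where
  "entry_time f U X z = (LEAST k. k \<ge> 1 \<and> (\<forall>j<k. (f ^^ j) z \<in> U) \<and> (f ^^ k) z \<in> X)"

definition Lz :: "(complex \<Rightarrow> complex) \<Rightarrow> complex set \<Rightarrow> complex set \<Rightarrow> complex \<Rightarrow> complex set" where
  "Lz f U X z = (let k = entry_time f U X z in
      Comp z (preim f U k (Comp ((f ^^ k) z) X)))"

end

theory Submission
  imports Defs
begin

text \<open>A proper holomorphic map sends every component of the preimage of a domain C onto C
  (properness gives closedness of the image, the open mapping theorem openness). Hence f^j maps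
  L_x(P) onto a component of f^-(k-j)(P), where k is the entry time of x. All points of L_x(P)
  first enter P at time k, so if f^j(L_x(P)) meets L_y(P), both are components of the same
  preimage of P and coincide. For niceness, L_x(P) is itself a puzzle piece (of depth k+n,
  if P has depth n), and neither P nor any L_x(P) has boundary points that later enter P.\<close>

lemma preim_0 [simp]: "preim f U 0 A = A"
  by (simp add: preim_def)

lemma preim_Suc: "preim f U (Suc n) A = U \<inter> f -` preim f U n A"
  unfolding preim_def
  by (auto simp: funpow_Suc_right less_Suc_eq_0_disj simp del: funpow.simps)

lemma preim_1: "preim f U 1 A = {z \<in> U. f z \<in> A}"
  by (auto simp: preim_Suc)

lemma preim_add: "preim f U (i + m) A = preim f U i (preim f U m A)"
  by (induction i) (simp_all add: preim_Suc)

lemma preim_iff: "z \<in> preim f U n A \<longleftrightarrow> (\<forall>j<n. (f ^^ j) z \<in> U) \<and> (f ^^ n) z \<in> A"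
  by (simp add: preim_def)

lemma preim_mono: "A \<subseteq> B \<Longrightarrow> preim f U n A \<subseteq> preim f U n B"
  unfolding preim_def by auto

lemma image_funpow_preim: "(f ^^ n) ` preim f U n A \<subseteq> A"
  by (auto simp: preim_iff)

lemma funpow_in_preim: "z \<in> preim f U (i + m) A \<Longrightarrow> (f ^^ i) z \<in> preim f U m A"
  by (simp add: preim_add preim_iff)

lemma preim_subset: "U \<subseteq> V \<Longrightarrow> A \<subseteq> V \<Longrightarrow> preim f U n A \<subseteq> V"
  by (cases n) (auto simp: preim_Suc)

lemma preim_preim_subset:
  assumes "U \<subseteq> V" "1 \<le> r"
  shows "preim f U r (preim f U n V) \<subseteq> preim f U n V"
proof -
  have "preim f U n (preim f U r V) \<subseteq> preim f U n V"
    by (rule preim_mono) (use assms in \<open>cases r, auto simp: preim_Suc\<close>)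
  then show ?thesis
    by (metis preim_add add.commute)
qed

lemma open_preim:
  assumes "open U" "continuous_on U f" "open A"
  shows "open (preim f U n A)"
proof (induction n)
  case (Suc n)
  then show ?case
    using assms unfolding preim_Suc by (metis Int_commute continuous_on_open_vimage)
qed (use assms in simp)

lemma continuous_on_funpow_preim:
  assumes "continuous_on U f"
  shows "continuous_on (preim f U n UNIV) (f ^^ n)"
proof (induction n)
  case (Suc n)
  have "continuous_on (U \<inter> f -` preim f U n UNIV) ((f ^^ n) \<circ> f)"
    by (rule continuous_on_compose)
       (auto intro: continuous_on_subset[OF assms] continuous_on_subset[OF Suc])
  then show ?case
    unfolding preim_Suc funpow_Suc_right .
qed simp

lemma component_Int_closure:
  assumes "C \<in> components S"
  shows "S \<inter> closure C = C"
proof -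
  obtain F where "closed F" "C = S \<inter> F"
    using closedin_component[OF assms] unfolding closedin_closed by blast
  then show ?thesis
    using closure_subset[of C] closure_minimal[of C F] by blast
qed

lemma component_preim_component:
  assumes "continuous_on U f" "P \<in> components D" "x \<in> preim f U k P"
  shows "connected_component_set (preim f U k P) x = connected_component_set (preim f U k D) x"
    (is "?L = ?C")
proof
  have PD: "P \<subseteq> D"
    using assms(2) by (rule in_components_subset)
  then show "?L \<subseteq> ?C"
    by (intro connected_component_mono preim_mono)
  have C_sub: "?C \<subseteq> preim f U k D"
    by (rule connected_component_subset)
  have x_C: "x \<in> ?C"
    using assms(3) preim_mono[OF PD] by auto
  have "connected ((f ^^ k) ` ?C)"
    using C_sub preim_mono[of D UNIV f U k]
    by (intro connected_continuous_image
        continuous_on_subset[OF continuous_on_funpow_preim[OF assms(1)]]) auto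
  moreover have "(f ^^ k) ` ?C \<subseteq> D" "(f ^^ k) x \<in> P"
    using C_sub assms(3) by (auto simp: preim_iff)
  ultimately have "(f ^^ k) ` ?C \<subseteq> P"
    using components_maximal[OF assms(2)] x_C by blast
  then have "?C \<subseteq> preim f U k P"
    using C_sub by (force simp: preim_iff)
  then show "?C \<subseteq> ?L"
    using connected_component_maximal[OF x_C] by simp
qed

locale proper_holomorphic_map =
  fixes f :: "complex \<Rightarrow> complex" and U V :: "complex set"
  assumes open_U: "open U" and open_V: "open V" and U_subset_V: "U \<subseteq> V"
    and holomorphic: "f holomorphic_on U"
    and proper: "\<And>K. compact K \<Longrightarrow> K \<subseteq> V \<Longrightarrow> compact {z \<in> U. f z \<in> K}"
begin

lemma continuous: "continuous_on U f"
  using holomorphic by (rule holomorphic_on_imp_continuous_on)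

lemma compact_component_vimage:
  assumes "A \<in> components {z \<in> U. f z \<in> C}" "C \<subseteq> V" "compact K" "K \<subseteq> C"
  shows "compact {z \<in> A. f z \<in> K}"
proof -
  obtain F where "closed F" "A = {z \<in> U. f z \<in> C} \<inter> F"
    using closedin_component[OF assms(1)] unfolding closedin_closed by blast
  then have "{z \<in> A. f z \<in> K} = {z \<in> U. f z \<in> K} \<inter> F"
    using assms(4) by blast
  then show ?thesis
    using proper[OF assms(3)] assms(2,4) \<open>closed F\<close> by (simp add: compact_Int_closed)
qed

lemma image_component_vimage:
  assumes C: "open C" "connected C" "C \<subseteq> V" and A: "A \<in> components {z \<in> U. f z \<in> C}"
  shows "f ` A = C"
proof -
  have "open {z \<in> U. f z \<in> C}"
    using open_preim[OF open_U continuous C(1), of 1] unfolding preim_1 .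
  then have open_A: "open A"
    using A open_components by blast
  have A_sub: "A \<subseteq> U" "f ` A \<subseteq> C"
    using in_components_subset[OF A] by auto
  have "A \<noteq> {}"
    using A in_components_nonempty by blast
  have "\<not> f constant_on A"
  proof
    assume "f constant_on A"
    then obtain c where c: "\<And>z. z \<in> A \<Longrightarrow> f z = c"
      unfolding constant_on_def by blast
    with \<open>A \<noteq> {}\<close> A_sub have "c \<in> C" by blast
    then have "compact {z \<in> A. f z \<in> {c}}"
      by (intro compact_component_vimage[OF A C(3)]) auto
    moreover have "{z \<in> A. f z \<in> {c}} = A"
      using c by auto
    ultimately show False
      using open_A \<open>A \<noteq> {}\<close> compact_open by auto
  qed
  then have "open (f ` A)"
    using open_mapping_thm[OF holomorphic_on_subset[OF holomorphic A_sub(1)] open_A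
        in_components_connected[OF A] open_A order_refl] by blast
  moreover have "C \<inter> closure (f ` A) \<subseteq> f ` A"
  proof
    fix q assume q: "q \<in> C \<inter> closure (f ` A)"
    then obtain r where r: "r > 0" "cball q r \<subseteq> C"
      using C(1) open_contains_cball by blast
    define A' where "A' = {z \<in> A. f z \<in> cball q r}"
    have "compact A'"
      unfolding A'_def using r by (intro compact_component_vimage[OF A C(3)]) auto
    then have "closed (f ` A')"
      using continuous A_sub(1) unfolding A'_def
      by (intro compact_imp_closed compact_continuous_image) (auto intro: continuous_on_subset)
    moreover have "ball q r \<inter> f ` A \<subseteq> f ` A'"
      unfolding A'_def by auto
    ultimately have "closure (ball q r \<inter> f ` A) \<subseteq> f ` A'"
      by (simp add: closure_minimal)
    moreover have "q \<in> closure (ball q r \<inter> f ` A)"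
      using q r open_Int_closure_subset[of "ball q r" "f ` A"] by auto
    ultimately show "q \<in> f ` A"
      unfolding A'_def by blast
  qed
  ultimately have "openin (top_of_set C) (f ` A)" "closedin (top_of_set C) (f ` A)"
    using A_sub(2) closure_subset[of "f ` A"] unfolding openin_open closedin_closed by blast+
  then have "f ` A = {} \<or> f ` A = C"
    using C(2) unfolding connected_clopen by blast
  then show ?thesis
    using \<open>A \<noteq> {}\<close> by blast
qed

lemma funpow_image_component_preim:
  assumes "open B" "B \<subseteq> V" "a \<in> preim f U (i + m) B"
  shows "(f ^^ i) ` connected_component_set (preim f U (i + m) B) a
           = connected_component_set (preim f U m B) ((f ^^ i) a)"
  using assms(3)
proof (induction i arbitrary: a)
  case (Suc i a)
  define D where "D = preim f U (i + m) B"
  define C where "C = connected_component_set D (f a)"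
  have split: "preim f U (Suc i + m) B = preim f U 1 D"
    unfolding D_def using preim_add[of f U 1 "i + m" B] by simp
  then have "a \<in> U" "f a \<in> D"
    using Suc.prems unfolding preim_1 by auto
  then have C_comp: "C \<in> components D" and a_C: "a \<in> preim f U 1 C"
    unfolding C_def preim_1 by (auto intro: componentsI)
  have "open D"
    unfolding D_def using open_preim[OF open_U continuous assms(1)] .
  moreover have "D \<subseteq> V"
    unfolding D_def using preim_subset[OF U_subset_V assms(2)] .
  ultimately have C: "open C" "connected C" "C \<subseteq> V"
    using open_components[OF _ C_comp] in_components_connected[OF C_comp]
      in_components_subset[OF C_comp] by auto
  have "connected_component_set (preim f U (Suc i + m) B) a
          = connected_component_set (preim f U 1 C) a"
    unfolding split using component_preim_component[OF continuous C_comp a_C] by simp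
  moreover have "f ` connected_component_set (preim f U 1 C) a = C"
    using a_C unfolding preim_1 by (intro image_component_vimage[OF C] componentsI)
  ultimately have "(f ^^ Suc i) ` connected_component_set (preim f U (Suc i + m) B) a
                     = (f ^^ i) ` C"
    by (metis funpow_Suc_right image_comp)
  also have "\<dots> = connected_component_set (preim f U m B) ((f ^^ Suc i) a)"
    using Suc.IH \<open>f a \<in> D\<close> unfolding C_def D_def
    by (simp add: funpow_Suc_right del: funpow.simps)
  finally show ?case .
qed simp

end

lemma open_jordan_domain: "jordan_domain D \<Longrightarrow> open D"
  unfolding jordan_domain_def
  by (metis closed_path_image open_inside simple_path_imp_path)

lemma in_setup_proper_holomorphic_map:
  assumes "in_setup f U V"
  shows "proper_holomorphic_map f U V"
proof -
  obtain \<V> \<U> where V: "V = \<Union>\<V>" "\<forall>D\<in>\<V>. jordan_domain D \<and> quasicircle (frontier D)"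
    and U: "U = \<Union>\<U>" "\<forall>D\<in>\<U>. jordan_domain D"
    and maps: "closure U \<subseteq> V" "f holomorphic_on U"
      "\<forall>K. compact K \<and> K \<subseteq> V \<longrightarrow> compact {z \<in> U. f z \<in> K}"
    using assms unfolding in_setup_def by (elim conjE exE) blast
  show ?thesis
  proof
    show "open U"
      unfolding U(1) using U(2) open_jordan_domain by blast
    show "open V"
      unfolding V(1) using V(2) open_jordan_domain by blast
    show "U \<subseteq> V"
      using maps(1) closure_subset by blast
  qed (use maps in auto)
qed

lemma entry_time_spec:
  assumes "x \<in> domD f U V X - X"
  shows "1 \<le> entry_time f U X x" "x \<in> preim f U (entry_time f U X x) X"
proof -
  obtain k where k: "x \<in> preim f U k X"
    using assms unfolding domD_def preim_iff by blast
  with assms have "1 \<le> k"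
    by (cases k) auto
  with k have "1 \<le> k \<and> x \<in> preim f U k X" by blast
  then have "1 \<le> entry_time f U X x \<and> x \<in> preim f U (entry_time f U X x) X"
    unfolding entry_time_def preim_iff[symmetric] by (rule LeastI)
  then show "1 \<le> entry_time f U X x" "x \<in> preim f U (entry_time f U X x) X"
    by blast+
qed

lemma entry_time_le:
  assumes "1 \<le> i" "x \<in> preim f U i X"
  shows "entry_time f U X x \<le> i"
  unfolding entry_time_def preim_iff[symmetric] using assms by (intro Least_le conjI)

lemma Lz_eq_component:
  assumes "connected X" "x \<in> domD f U V X - X"
  shows "Lz f U X x = connected_component_set (preim f U (entry_time f U X x) X) x"
  using entry_time_spec(2)[OF assms(2)] connected_component_eq_self[OF assms(1)]
  unfolding Lz_def Comp_def Let_def preim_iff by simp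

lemma nice_UnionI:
  assumes "finite \<Q>" "\<And>Q. Q \<in> \<Q> \<Longrightarrow> puzzle_piece f U V Q" "\<And>Q. Q \<in> \<Q> \<Longrightarrow> open Q"
    and enters: "\<And>Q z. Q \<in> \<Q> \<Longrightarrow> z \<in> Q \<Longrightarrow> \<exists>k. z \<in> preim f U k P"
    and closure_not_return:
      "\<And>Q z m. Q \<in> \<Q> \<Longrightarrow> z \<in> closure Q \<Longrightarrow> z \<notin> Q \<Longrightarrow> 1 \<le> m \<Longrightarrow> z \<notin> preim f U m P"
  shows "nice f U V (\<Union>\<Q>)"
  unfolding nice_def
proof (intro conjI ballI allI impI notI)
  show "\<exists>\<P>. finite \<P> \<and> (\<forall>P\<in>\<P>. puzzle_piece f U V P) \<and> \<Union>\<Q> = \<Union>\<P>"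
    using assms(1,2) by blast
  fix z m
  assume z: "z \<in> frontier (\<Union>\<Q>)" and m: "1 \<le> m" "\<forall>j<m. (f ^^ j) z \<in> U"
    and "(f ^^ m) z \<in> \<Union>\<Q>"
  then obtain k where "(f ^^ m) z \<in> preim f U k P"
    using enters by blast
  with m have z_enters: "z \<in> preim f U (m + k) P"
    unfolding preim_add by (simp add: preim_iff)
  have "open (\<Union>\<Q>)"
    using assms(3) by blast
  then have "z \<notin> \<Union>\<Q>" "z \<in> closure (\<Union>\<Q>)"
    using z by (auto simp: frontier_def interior_open)
  moreover have "closure (\<Union>\<Q>) \<subseteq> \<Union>(closure ` \<Q>)"
    using assms(1) closure_subset by (intro closure_minimal closed_Union) auto
  ultimately obtain Q where "Q \<in> \<Q>" "z \<in> closure Q" "z \<notin> Q"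
    by blast
  then show False
    using closure_not_return[of Q z "m + k"] m(1) z_enters by simp
qed

locale puzzle_piece_of_depth = proper_holomorphic_map +
  fixes n :: nat and P :: "complex set"
  assumes P_component: "P \<in> components (preim f U n V)"
begin

lemma open_P: "open P"
  using open_components[OF open_preim[OF open_U continuous open_V] P_component] .

lemma connected_P: "connected P"
  using P_component by (rule in_components_connected)

lemma P_subset: "P \<subseteq> preim f U n V"
  using P_component by (rule in_components_subset)

lemma preim_P_subset: "1 \<le> r \<Longrightarrow> preim f U r P \<subseteq> preim f U n V"
  using preim_mono[OF P_subset] preim_preim_subset[OF U_subset_V] by blast

lemma closure_P_not_return:
  assumes "z \<in> closure P" "z \<notin> P" "1 \<le> m"
  shows "z \<notin> preim f U m P"
  using component_Int_closure[OF P_component] preim_P_subset[OF assms(3)] assms(1,2) by blast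

lemma Lz_component:
  "x \<in> domD f U V P - P \<Longrightarrow>
     Lz f U P x = connected_component_set (preim f U (entry_time f U P x) P) x"
  by (rule Lz_eq_component[OF connected_P])

lemma Lz_subset: "x \<in> domD f U V P - P \<Longrightarrow> Lz f U P x \<subseteq> preim f U (entry_time f U P x) P"
  by (simp add: Lz_component connected_component_subset)

lemma connected_Lz: "x \<in> domD f U V P - P \<Longrightarrow> connected (Lz f U P x)"
  by (simp add: Lz_component)

lemma mem_Lz: "x \<in> domD f U V P - P \<Longrightarrow> x \<in> Lz f U P x"
  using entry_time_spec(2) by (simp add: Lz_component)

text \<open>If a point of L_x(P) reached P at an earlier time i, the connected set f^i(L_x(P)), which
  lies in the puzzle of depth n, would be contained in P; so x itself would enter P at time i.\<close>

lemma Lz_avoids_P_before_entry: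
  assumes x: "x \<in> domD f U V P - P" and w: "w \<in> Lz f U P x"
    and i: "1 \<le> i" "i < entry_time f U P x"
  shows "(f ^^ i) w \<notin> P"
proof
  assume w_P: "(f ^^ i) w \<in> P"
  define k where "k = entry_time f U P x"
  define L where "L = Lz f U P x"
  have L_sub: "L \<subseteq> preim f U i (preim f U (k - i) P)"
    using Lz_subset[OF x] preim_add[of f U i "k - i" P] i(2) unfolding k_def L_def by simp
  also have "\<dots> \<subseteq> preim f U i UNIV"
    by (rule preim_mono) simp
  finally have "connected ((f ^^ i) ` L)"
    using connected_Lz[OF x] unfolding L_def
    by (intro connected_continuous_image
        continuous_on_subset[OF continuous_on_funpow_preim[OF continuous]])
  moreover have "(f ^^ i) ` L \<subseteq> preim f U n V"
    using image_mono[OF L_sub, of "f ^^ i"] image_funpow_preim preim_P_subset[of "k - i"] i(2)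
    unfolding k_def by fastforce
  moreover have "(f ^^ i) ` L \<inter> P \<noteq> {}"
    using w w_P unfolding L_def by blast
  ultimately have "(f ^^ i) ` L \<subseteq> P"
    using components_maximal[OF P_component] by blast
  then have "(f ^^ i) x \<in> P" "x \<in> preim f U i (preim f U (k - i) P)"
    using mem_Lz[OF x] L_sub unfolding L_def by blast+
  then have "x \<in> preim f U i P"
    by (simp add: preim_iff)
  then show False
    using entry_time_le[OF i(1)] i(2) by fastforce
qed

lemma P_subset_V: "P \<subseteq> V"
  using P_subset preim_subset[OF U_subset_V order_refl] by blast

lemma funpow_image_Lz:
  assumes x: "x \<in> domD f U V P - P" and j: "j \<le> entry_time f U P x"
  shows "(f ^^ j) ` Lz f U P x
           = connected_component_set (preim f U (entry_time f U P x - j) P) ((f ^^ j) x)"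
proof -
  have k: "entry_time f U P x = j + (entry_time f U P x - j)"
    using j by simp
  show ?thesis
    using funpow_image_component_preim[OF open_P P_subset_V, of x j "entry_time f U P x - j"]
      entry_time_spec(2)[OF x] unfolding Lz_component[OF x] by (simp flip: k)
qed

lemma funpow_image_Lz_eq_if_meets:
  assumes x: "x \<in> domD f U V P - P" and y: "y \<in> domD f U V P - P"
    and j: "j < entry_time f U P x" and meets: "(f ^^ j) ` Lz f U P x \<inter> Lz f U P y \<noteq> {}"
  shows "(f ^^ j) ` Lz f U P x = Lz f U P y"
proof -
  define kx ky where "kx = entry_time f U P x" and "ky = entry_time f U P y"
  obtain w where w: "w \<in> Lz f U P x" and z: "(f ^^ j) w \<in> Lz f U P y"
    using meets by blast
  have "w \<in> preim f U (j + (kx - j)) P"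
    using Lz_subset[OF x] w j unfolding kx_def by auto
  then have z_x: "(f ^^ j) w \<in> preim f U (kx - j) P"
    by (rule funpow_in_preim)
  have z_y: "(f ^^ j) w \<in> preim f U ky P"
    using Lz_subset[OF y] z unfolding ky_def by blast
  have "ky = kx - j"
  proof (rule linorder_cases)
    assume "ky < kx - j"
    moreover have "(f ^^ (ky + j)) w \<in> P"
      using z_y by (simp add: preim_iff funpow_add)
    ultimately show ?thesis
      using Lz_avoids_P_before_entry[OF x w, of "ky + j"] entry_time_spec(1)[OF y]
      unfolding kx_def ky_def by simp
  next
    assume "kx - j < ky"
    moreover have "(f ^^ (kx - j)) ((f ^^ j) w) \<in> P"
      using z_x by (simp add: preim_iff)
    ultimately show ?thesis
      using Lz_avoids_P_before_entry[OF y z, of "kx - j"] j unfolding kx_def ky_def by simp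
  qed
  then have "Lz f U P y = connected_component_set (preim f U (kx - j) P) ((f ^^ j) w)"
    using Lz_component[OF y] z connected_component_eq unfolding ky_def by metis
  moreover have "(f ^^ j) ` Lz f U P x = connected_component_set (preim f U (kx - j) P) ((f ^^ j) w)"
    using funpow_image_Lz[OF x] j w connected_component_eq unfolding kx_def
    by (metis image_eqI less_imp_le_nat)
  ultimately show ?thesis
    by simp
qed

lemma Lz_in_components:
  assumes x: "x \<in> domD f U V P - P"
  shows "Lz f U P x \<in> components (preim f U (entry_time f U P x + n) V)"
proof -
  have "x \<in> preim f U (entry_time f U P x) (preim f U n V)"
    using entry_time_spec(2)[OF x] preim_mono[OF P_subset] by blast
  then show ?thesis
    unfolding Lz_component[OF x] preim_add
      component_preim_component[OF continuous P_component entry_time_spec(2)[OF x]]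
    by (rule componentsI)
qed

lemma open_Lz: "x \<in> domD f U V P - P \<Longrightarrow> open (Lz f U P x)"
  using open_components[OF open_preim[OF open_U continuous open_V] Lz_in_components] .

text \<open>A boundary point entering P before time k would, by openness, be approximated by points of
  L_x(P) doing so; one entering at time \<ge> k lies in f^-(k+n)(V), of which L_x(P) is a
  relatively closed component.\<close>

lemma closure_Lz_not_return:
  assumes x: "x \<in> domD f U V P - P"
    and z: "z \<in> closure (Lz f U P x)" "z \<notin> Lz f U P x" and m: "1 \<le> m"
  shows "z \<notin> preim f U m P"
proof
  assume z_m: "z \<in> preim f U m P"
  define k where "k = entry_time f U P x"
  show False
  proof (cases "m < k")
    case True
    have "open (preim f U m P)"
      using open_preim[OF open_U continuous open_P] .
    then obtain w where "w \<in> Lz f U P x" "w \<in> preim f U m P"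
      using z(1) z_m open_Int_closure_eq_empty by blast
    then show False
      using Lz_avoids_P_before_entry[OF x _ m] True unfolding k_def by (simp add: preim_iff)
  next
    case False
    have "preim f U (m - k) P \<subseteq> preim f U n V"
      using P_subset preim_P_subset[of "m - k"] by (cases "m - k") auto
    then have "z \<in> preim f U (k + n) V"
      using z_m False preim_add[of f U k "m - k" P] preim_mono[of _ _ f U k]
      unfolding preim_add[of f U k n V] by (metis le_add_diff_inverse not_less subsetD)
    then show False
      using component_Int_closure[OF Lz_in_components[OF x]] z unfolding k_def by blast
  qed
qed

end

theorem lemma7p7:
  fixes f :: "complex \<Rightarrow> complex" and U V P :: "complex set" and S :: "complex set"
  assumes "in_setup f U V"
    and "puzzle_piece f U V P"
    and "finite S" and "S \<subseteq> V"
    and "S \<subseteq> domD f U V P - P"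
  shows "(\<forall>x\<in>S. \<forall>j < entry_time f U P x.
            (\<exists>y\<in>S. (f ^^ j) ` Lz f U P x = Lz f U P y) \<or>
            (\<forall>y\<in>S. (f ^^ j) ` Lz f U P x \<inter> Lz f U P y = {}))
      \<and> nice f U V ((\<Union>x\<in>S. Lz f U P x) \<union> P)"
proof -
  interpret proper_holomorphic_map f U V
    using assms(1) by (rule in_setup_proper_holomorphic_map)
  obtain n where "P \<in> components (preim f U n V)"
    using assms(2) unfolding puzzle_piece_def by blast
  then interpret puzzle_piece_of_depth f U V n P
    by unfold_locales
  have S: "x \<in> domD f U V P - P" if "x \<in> S" for x
    using assms(5) that by blast
  have "nice f U V (\<Union>(insert P (Lz f U P ` S)))"
  proof (rule nice_UnionI)
    show "puzzle_piece f U V Q" if "Q \<in> insert P (Lz f U P ` S)" for Q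
      using that assms(2) Lz_in_components[OF S] unfolding puzzle_piece_def by blast
    show "\<exists>k. z \<in> preim f U k P" if "Q \<in> insert P (Lz f U P ` S)" "z \<in> Q" for Q z
      using that Lz_subset[OF S] preim_0 by blast
  qed (use assms(3) open_P open_Lz[OF S] closure_P_not_return closure_Lz_not_return[OF S] in auto)
  moreover have "(\<exists>y\<in>S. (f ^^ j) ` Lz f U P x = Lz f U P y) \<or>
      (\<forall>y\<in>S. (f ^^ j) ` Lz f U P x \<inter> Lz f U P y = {})"
    if "x \<in> S" "j < entry_time f U P x" for x j
    using funpow_image_Lz_eq_if_meets[OF S[OF that(1)] S that(2)] by blast
  ultimately show ?thesis
    by (simp add: Un_commute)
qed

end
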